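(* Let $n\geq 3$ and let $L\cong\mathbf{2}^n$ be a Boolean lattice. Then $\operatorname{sdim}_M\bigl(G^c(L)\bigr)=2^n-2^{n-1}-1$.
   Context: For a bounded lattice $M$ with $0$, $Z^*(M)=\{a\in M\setminus\{0\}:\ a\wedge b=0 \text{ for some } b\neq 0\}$. The graph $G^c(M)$ has vertex set $Z^*(M)$, two distinct vertices $a,b$ adjacent iff $a\wedge b\neq 0$. For a connected graph $G$, a vertex $w$ strongly resolves $u,v$ if some shortest $u$–$w$ path contains $v$ or some shortest $v$–$w$ path contains $u$; a set $W$ is a strong resolving set if every pair of distinct vertices is strongly resolved by some vertex of $W$; $\operatorname{sdim}_M(G)$ is the minimum size of a strong resolving set. *)

theory Defs
  imports Main
begin

text \<open>A walk is a nonempty list of vertices in V with consecutive entries adjacent;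
  its length is the number of edges, i.e. length minus one.\<close>

definition walk :: "'v set \<Rightarrow> ('v \<Rightarrow> 'v \<Rightarrow> bool) \<Rightarrow> 'v list \<Rightarrow> bool" where
  "walk V E xs \<longleftrightarrow> xs \<noteq> [] \<and> set xs \<subseteq> V \<and>
     (\<forall>i. Suc i < length xs \<longrightarrow> E (xs ! i) (xs ! Suc i))"

definition gdist :: "'v set \<Rightarrow> ('v \<Rightarrow> 'v \<Rightarrow> bool) \<Rightarrow> 'v \<Rightarrow> 'v \<Rightarrow> nat" where
  "gdist V E u v = (LEAST k. \<exists>xs. walk V E xs \<and> hd xs = u \<and> last xs = v \<and> length xs = Suc k)"

definition on_geodesic :: "'v set \<Rightarrow> ('v \<Rightarrow> 'v \<Rightarrow> bool) \<Rightarrow> 'v \<Rightarrow> 'v \<Rightarrow> 'v \<Rightarrow> bool" where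
  "on_geodesic V E u w x \<longleftrightarrow> (\<exists>xs. walk V E xs \<and> hd xs = u \<and> last xs = w \<and>
      length xs = Suc (gdist V E u w) \<and> x \<in> set xs)"

definition strongly_resolves :: "'v set \<Rightarrow> ('v \<Rightarrow> 'v \<Rightarrow> bool) \<Rightarrow> 'v \<Rightarrow> 'v \<Rightarrow> 'v \<Rightarrow> bool" where
  "strongly_resolves V E w u v \<longleftrightarrow> on_geodesic V E u w v \<or> on_geodesic V E v w u"

definition strong_resolving_set :: "'v set \<Rightarrow> ('v \<Rightarrow> 'v \<Rightarrow> bool) \<Rightarrow> 'v set \<Rightarrow> bool" where
  "strong_resolving_set V E W \<longleftrightarrow> W \<subseteq> V \<and>
     (\<forall>u\<in>V. \<forall>v\<in>V. u \<noteq> v \<longrightarrow> (\<exists>w\<in>W. strongly_resolves V E w u v))"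

definition sdim :: "'v set \<Rightarrow> ('v \<Rightarrow> 'v \<Rightarrow> bool) \<Rightarrow> nat" where
  "sdim V E = (LEAST k. \<exists>W. strong_resolving_set V E W \<and> finite W \<and> card W = k)"

text \<open>Zero-divisor set Z*(M) and the graph G^c(M) of a bounded lattice M (the whole type).\<close>
definition Zstar :: "'a::bounded_lattice set" where
  "Zstar = {a. a \<noteq> bot \<and> (\<exists>b. b \<noteq> bot \<and> inf a b = bot)}"

definition Gc_adj :: "'a::bounded_lattice \<Rightarrow> 'a \<Rightarrow> bool" where
  "Gc_adj a b \<longleftrightarrow> a \<noteq> b \<and> inf a b \<noteq> bot"

end

(*
  Via the isomorphism, the vertices of G^c(2^n) are the nonempty proper subsets of an
  n-element set, adjacent iff they intersect. For n >= 3 two disjoint such sets have a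
  common neighbour {i, j}, so the graph has diameter 2, and in a diameter-2 graph a vertex
  v not adjacent to u lies on a u--w geodesic only if v = w. Hence every strong resolving
  set contains A or its complement for each vertex A, and so has at least half of the
  2^n - 2 vertices. Conversely, the 2^(n-1) - 1 sets avoiding a fixed element i0 form a
  strong resolving set: two sets containing i0 are adjacent, and if y lies in v but not in
  u then u, v, {y} is a geodesic.
*)
theory Submission
  imports Defs
begin

lemma walk_Cons_Cons:
  "walk V E (u # v # xs) \<longleftrightarrow> u \<in> V \<and> E u v \<and> walk V E (v # xs)"
  unfolding walk_def by (simp add: All_less_Suc2) blast

lemma walk_singleton [simp]: "walk V E [u] \<longleftrightarrow> u \<in> V"
  unfolding walk_def by auto

lemma walk_take: "walk V E xs \<Longrightarrow> i < length xs \<Longrightarrow> walk V E (take (Suc i) xs)"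
  unfolding walk_def by (auto dest: in_set_takeD)

lemma walk_drop: "walk V E xs \<Longrightarrow> i < length xs \<Longrightarrow> walk V E (drop i xs)"
  unfolding walk_def by (auto dest: in_set_dropD)

lemma walk_length_le_2_ends:
  assumes "walk V E xs" "length xs \<le> 2"
  shows "hd xs = last xs \<or> E (hd xs) (last xs)"
proof -
  have "xs \<noteq> []" using assms(1) by (simp add: walk_def)
  with assms(2) consider u where "xs = [u]" | u v where "xs = [u, v]"
    by (cases xs; cases "tl xs") auto
  then show ?thesis
    by cases (use assms(1) in \<open>auto simp: walk_Cons_Cons\<close>)
qed

lemma gdist_le_length:
  assumes "walk V E xs"
  shows "gdist V E (hd xs) (last xs) \<le> length xs - 1"
proof -
  have "length xs = Suc (length xs - 1)" using assms by (cases xs) (auto simp: walk_def)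
  with assms show ?thesis unfolding gdist_def by (intro Least_le) blast
qed

lemma shortest_walk_exists:
  assumes "walk V E ys"
  shows "\<exists>xs. walk V E xs \<and> hd xs = hd ys \<and> last xs = last ys \<and>
           length xs = Suc (gdist V E (hd ys) (last ys))"
proof -
  have "length ys = Suc (length ys - 1)" using assms by (cases ys) (auto simp: walk_def)
  with assms have "\<exists>k xs. walk V E xs \<and> hd xs = hd ys \<and> last xs = last ys \<and> length xs = Suc k"
    by blast
  then show ?thesis unfolding gdist_def by (rule LeastI_ex)
qed

lemma gdist_add_le_if_on_geodesic:
  assumes "on_geodesic V E u w v"
  shows "gdist V E u v + gdist V E v w \<le> gdist V E u w"
proof -
  obtain xs where xs: "walk V E xs" "hd xs = u" "last xs = w"
    "length xs = Suc (gdist V E u w)" "v \<in> set xs"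
    using assms unfolding on_geodesic_def by blast
  obtain i where i: "i < length xs" "xs ! i = v" using xs(5) by (metis in_set_conv_nth)
  have "hd (take (Suc i) xs) = u" using xs(2) by simp
  moreover have "last (take (Suc i) xs) = v" using i by (simp add: take_Suc_conv_app_nth)
  ultimately have "gdist V E u v \<le> length (take (Suc i) xs) - 1"
    using gdist_le_length[OF walk_take[OF xs(1) i(1)]] by simp
  moreover have "gdist V E v w \<le> length (drop i xs) - 1"
    using gdist_le_length[OF walk_drop[OF xs(1) i(1)]] xs(3) i
    by (simp add: hd_drop_conv_nth last_drop)
  ultimately show ?thesis using i xs(4) by auto
qed

lemma sdim_eqI:
  assumes "strong_resolving_set V E W" "finite W"
    and "\<And>W'. strong_resolving_set V E W' \<Longrightarrow> finite W' \<Longrightarrow> card W \<le> card W'"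
  shows "sdim V E = card W"
  unfolding sdim_def using assms by (intro Least_equality) auto

locale diameter_two =
  fixes V :: "'v set" and E :: "'v \<Rightarrow> 'v \<Rightarrow> bool"
  assumes common_neighbour:
    "\<lbrakk>u \<in> V; v \<in> V; u \<noteq> v; \<not> E u v\<rbrakk> \<Longrightarrow> \<exists>x\<in>V. E u x \<and> E x v"
begin

lemma walk_exists_le_3:
  assumes "u \<in> V" "v \<in> V"
  shows "\<exists>xs. walk V E xs \<and> hd xs = u \<and> last xs = v \<and> length xs \<le> 3"
proof -
  consider "u = v" | "u \<noteq> v" "E u v" | x where "x \<in> V" "E u x" "E x v"
    using common_neighbour[OF assms] by blast
  then show ?thesis
  proof cases
    case 1
    then show ?thesis using assms by (intro exI[of _ "[u]"]) simp
  next
    case 2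
    then show ?thesis using assms by (intro exI[of _ "[u, v]"]) (simp add: walk_Cons_Cons)
  next
    case 3
    then show ?thesis using assms by (intro exI[of _ "[u, x, v]"]) (simp add: walk_Cons_Cons)
  qed
qed

lemma gdist_le_2: "u \<in> V \<Longrightarrow> v \<in> V \<Longrightarrow> gdist V E u v \<le> 2"
  using walk_exists_le_3 gdist_le_length by fastforce

lemma gdist_eq_0_iff:
  assumes "u \<in> V" "v \<in> V"
  shows "gdist V E u v = 0 \<longleftrightarrow> u = v"
proof
  assume "gdist V E u v = 0"
  moreover obtain xs where "walk V E xs" "hd xs = u" "last xs = v"
    using walk_exists_le_3[OF assms] by blast
  ultimately show "u = v"
    using shortest_walk_exists[of V E xs] by (auto simp: length_Suc_conv)
next
  assume "u = v"
  then show "gdist V E u v = 0" using gdist_le_length[of V E "[u]"] assms by simp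
qed

lemma gdist_eq_2:
  assumes "u \<in> V" "v \<in> V" "u \<noteq> v" "\<not> E u v"
  shows "gdist V E u v = 2"
proof -
  obtain ys where "walk V E ys" "hd ys = u" "last ys = v"
    using walk_exists_le_3[OF assms(1,2)] by blast
  then obtain xs where "walk V E xs" "hd xs = u" "last xs = v"
    "length xs = Suc (gdist V E u v)"
    using shortest_walk_exists by metis
  then have "\<not> gdist V E u v \<le> 1"
    using walk_length_le_2_ends[of V E xs] assms(3,4) by auto
  then show ?thesis using gdist_le_2[OF assms(1,2)] by simp
qed

lemma on_geodesic_endpoint:
  assumes "u \<in> V" "v \<in> V"
  shows "on_geodesic V E u v v"
proof -
  obtain ys where "walk V E ys" "hd ys = u" "last ys = v"
    using walk_exists_le_3[OF assms] by blast
  then show ?thesis unfolding on_geodesic_def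
    using shortest_walk_exists by (metis last_in_set walk_def)
qed

lemma on_geodesic_middle:
  assumes "u \<in> V" "v \<in> V" "w \<in> V" "E u v" "E v w" "u \<noteq> w" "\<not> E u w"
  shows "on_geodesic V E u w v"
  unfolding on_geodesic_def using assms gdist_eq_2[of u w]
  by (intro exI[of _ "[u, v, w]"]) (simp add: walk_Cons_Cons)

lemma on_geodesic_nonadjacent_eq:
  assumes "on_geodesic V E u w v" "u \<in> V" "v \<in> V" "w \<in> V" "u \<noteq> v" "\<not> E u v"
  shows "v = w"
proof -
  have "gdist V E v w = 0"
    using gdist_add_le_if_on_geodesic[OF assms(1)] gdist_eq_2[of u v] gdist_le_2[of u w] assms
    by linarith
  then show ?thesis using gdist_eq_0_iff assms(3,4) by blast
qed

lemma strong_resolving_setI: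
  assumes "W \<subseteq> V"
    and "\<And>u v. u \<in> V - W \<Longrightarrow> v \<in> V - W \<Longrightarrow> u \<noteq> v \<Longrightarrow> \<exists>w\<in>W. strongly_resolves V E w u v"
  shows "strong_resolving_set V E W"
  unfolding strong_resolving_set_def
proof (intro conjI assms(1) ballI impI)
  fix u v assume uv: "u \<in> V" "v \<in> V" "u \<noteq> v"
  show "\<exists>w\<in>W. strongly_resolves V E w u v"
  proof (cases "u \<in> W \<or> v \<in> W")
    case True
    then show ?thesis
      using on_geodesic_endpoint uv(1,2) unfolding strongly_resolves_def by blast
  next
    case False
    then show ?thesis using assms(2) uv by blast
  qed
qed

lemma strong_resolving_set_nonadjacent_pair:
  assumes "strong_resolving_set V E W" "u \<in> V" "v \<in> V" "u \<noteq> v" "\<not> E u v" "\<not> E v u"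
  shows "u \<in> W \<or> v \<in> W"
proof -
  obtain w where "w \<in> W" "on_geodesic V E u w v \<or> on_geodesic V E v w u"
    using assms(1-4) unfolding strong_resolving_set_def strongly_resolves_def by blast
  moreover have "w \<in> V" using assms(1) \<open>w \<in> W\<close> by (auto simp: strong_resolving_set_def)
  ultimately show ?thesis using on_geodesic_nonadjacent_eq assms(2-6) by metis
qed

lemma card_le_double_strong_resolving_set:
  assumes "finite V" "strong_resolving_set V E W"
    and f: "\<And>u. u \<in> V \<Longrightarrow> f u \<in> V \<and> f u \<noteq> u \<and> \<not> E u (f u) \<and> f (f u) = u"
  shows "card V \<le> 2 * card W"
proof -
  have WV: "W \<subseteq> V" using assms(2) by (simp add: strong_resolving_set_def)
  have "V \<subseteq> W \<union> f ` W"
  proof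
    fix u assume u: "u \<in> V"
    then have "u \<in> W \<or> f u \<in> W"
      using strong_resolving_set_nonadjacent_pair[OF assms(2)] f[OF u] f[of "f u"] by metis
    then show "u \<in> W \<union> f ` W" using f[OF u] by (metis UnI1 UnI2 image_eqI)
  qed
  then have "card V \<le> card (W \<union> f ` W)"
    using assms(1) WV by (intro card_mono) (auto intro: finite_subset)
  also have "\<dots> \<le> card W + card (f ` W)" by (rule card_Un_le)
  also have "\<dots> \<le> 2 * card W" using card_image_le[of W f] assms(1) WV finite_subset by fastforce
  finally show ?thesis .
qed

lemma sdim_eq_half_card:
  assumes "finite V" "strong_resolving_set V E W" "card V = 2 * card W"
    and "\<And>u. u \<in> V \<Longrightarrow> f u \<in> V \<and> f u \<noteq> u \<and> \<not> E u (f u) \<and> f (f u) = u"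
  shows "sdim V E = card W"
proof (rule sdim_eqI)
  show "finite W" using assms(1,2) finite_subset by (auto simp: strong_resolving_set_def)
  show "card W \<le> card W'" if "strong_resolving_set V E W'" for W'
    using card_le_double_strong_resolving_set[OF assms(1) that assms(4)] assms(3) by linarith
qed (fact assms(2))

end

locale powerset_lattice_iso =
  fixes N :: "'i set" and \<phi> :: "'i set \<Rightarrow> 'a::bounded_lattice"
  assumes bij: "bij_betw \<phi> (Pow N) UNIV"
    and le_iff: "A \<subseteq> N \<Longrightarrow> B \<subseteq> N \<Longrightarrow> \<phi> A \<le> \<phi> B \<longleftrightarrow> A \<subseteq> B"
begin

definition set_of :: "'a \<Rightarrow> 'i set" where
  "set_of = inv_into (Pow N) \<phi>"

lemma set_of_subset: "set_of a \<subseteq> N"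
  using bij inv_into_into[of a \<phi> "Pow N"] by (auto simp: set_of_def bij_betw_def)

lemma phi_set_of [simp]: "\<phi> (set_of a) = a"
  using bij f_inv_into_f[of a \<phi> "Pow N"] by (auto simp: set_of_def bij_betw_def)

lemma set_of_phi [simp]: "A \<subseteq> N \<Longrightarrow> set_of (\<phi> A) = A"
  using bij by (simp add: set_of_def bij_betw_def)

lemma set_of_inject: "set_of a = set_of b \<longleftrightarrow> a = b"
  by (metis phi_set_of)

lemma le_iff_set_of: "a \<le> b \<longleftrightarrow> set_of a \<subseteq> set_of b"
  using le_iff[OF set_of_subset set_of_subset] by simp

lemma set_of_inf: "set_of (inf a b) = set_of a \<inter> set_of b"
proof
  show "set_of (inf a b) \<subseteq> set_of a \<inter> set_of b"
    using le_iff_set_of by (metis inf.cobounded1 inf.cobounded2 le_inf_iff)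
  have S: "set_of a \<inter> set_of b \<subseteq> N" using set_of_subset by blast
  then have "\<phi> (set_of a \<inter> set_of b) \<le> a" "\<phi> (set_of a \<inter> set_of b) \<le> b"
    by (simp_all add: le_iff_set_of)
  then have "\<phi> (set_of a \<inter> set_of b) \<le> inf a b" by simp
  then show "set_of a \<inter> set_of b \<subseteq> set_of (inf a b)"
    using S by (simp add: le_iff_set_of)
qed

lemma set_of_eq_empty_iff: "set_of a = {} \<longleftrightarrow> a = bot"
proof -
  have "set_of bot \<subseteq> set_of (\<phi> {})" by (simp only: le_iff_set_of[symmetric]) simp
  then have "set_of bot = {}" by simp
  then show ?thesis using set_of_inject by metis
qed

lemma Zstar_iff: "a \<in> Zstar \<longleftrightarrow> set_of a \<noteq> {} \<and> set_of a \<noteq> N"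
proof
  assume "a \<in> Zstar"
  then obtain b where "a \<noteq> bot" "b \<noteq> bot" "inf a b = bot" unfolding Zstar_def by auto
  then show "set_of a \<noteq> {} \<and> set_of a \<noteq> N"
    using set_of_subset[of b] by (auto simp: set_of_eq_empty_iff[symmetric] set_of_inf)
next
  assume a: "set_of a \<noteq> {} \<and> set_of a \<noteq> N"
  then have "N - set_of a \<noteq> {}" using set_of_subset[of a] by blast
  then show "a \<in> Zstar" unfolding Zstar_def using a
    by (auto simp: set_of_eq_empty_iff[symmetric] set_of_inf intro!: exI[of _ "\<phi> (N - set_of a)"])
qed

lemma Gc_adj_iff: "Gc_adj a b \<longleftrightarrow> a \<noteq> b \<and> set_of a \<inter> set_of b \<noteq> {}"
  by (simp add: Gc_adj_def set_of_eq_empty_iff[symmetric] set_of_inf)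

lemma card_set_of_preimage:
  assumes "S \<subseteq> Pow N"
  shows "card {a. set_of a \<in> S} = card S"
proof -
  have "{a. set_of a \<in> S} = \<phi> ` S" using assms by force
  moreover have "inj_on \<phi> S" using bij assms by (auto simp: bij_betw_def intro: inj_on_subset)
  ultimately show ?thesis by (simp add: card_image)
qed

lemma pair_in_Zstar:
  assumes "3 \<le> card N" "i \<in> N" "j \<in> N"
  shows "\<phi> {i, j} \<in> Zstar"
proof -
  have "card {i, j} < card N" using assms(1) by (simp add: card_insert_if)
  then have "{i, j} \<noteq> N" by auto
  then show ?thesis using assms(2,3) by (simp add: Zstar_iff)
qed

lemma diameter_two_Zstar:
  assumes "3 \<le> card N"
  shows "diameter_two (Zstar :: 'a set) Gc_adj"
proof
  fix u v :: 'a
  assume uv: "u \<in> Zstar" "v \<in> Zstar" "u \<noteq> v" "\<not> Gc_adj u v"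
  obtain i j where ij: "i \<in> set_of u" "j \<in> set_of v" using uv(1,2) by (auto simp: Zstar_iff)
  have disjoint: "set_of u \<inter> set_of v = {}" using uv(3,4) by (simp add: Gc_adj_iff)
  have "{i, j} \<subseteq> N" using ij set_of_subset by blast
  then have "Gc_adj u (\<phi> {i, j}) \<and> Gc_adj (\<phi> {i, j}) v"
    using ij disjoint by (auto simp: Gc_adj_iff)
  then show "\<exists>x\<in>Zstar. Gc_adj u x \<and> Gc_adj x v"
    using pair_in_Zstar[OF assms] ij set_of_subset by blast
qed

lemma on_geodesic_singleton:
  assumes "3 \<le> card N" "u \<in> Zstar" "v \<in> Zstar"
    and "set_of u \<inter> set_of v \<noteq> {}" "y \<in> set_of v - set_of u"
  shows "on_geodesic Zstar Gc_adj u (\<phi> {y}) v"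
proof -
  interpret diameter_two "Zstar :: 'a set" Gc_adj by (rule diameter_two_Zstar[OF assms(1)])
  have y: "y \<in> N" using assms(5) set_of_subset by blast
  then have "\<phi> {y} \<in> Zstar" using pair_in_Zstar[OF assms(1)] by (metis insert_absorb2)
  moreover have "set_of v \<noteq> {y}" using assms(4,5) by auto
  ultimately show ?thesis
    using assms(2-5) y by (intro on_geodesic_middle) (auto simp: Gc_adj_iff)
qed

lemma card_Zstar:
  assumes "finite N" "N \<noteq> {}"
  shows "card (Zstar :: 'a set) = 2 ^ card N - 2"
proof -
  have "(Zstar :: 'a set) = {a. set_of a \<in> Pow N - {{}, N}}"
    using set_of_subset by (auto simp: Zstar_iff)
  moreover have "card {{}, N} = 2" using assms(2) by simp
  then have "card (Pow N - {{}, N}) = 2 ^ card N - 2"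
    using assms(1) by (subst card_Diff_subset) (auto simp: card_Pow)
  ultimately show ?thesis using card_set_of_preimage[of "Pow N - {{}, N}"] by auto
qed

definition Zstar_avoiding :: "'i \<Rightarrow> 'a set" where
  "Zstar_avoiding i = {a. set_of a \<noteq> {} \<and> i \<notin> set_of a}"

lemma Zstar_avoiding_subset: "i \<in> N \<Longrightarrow> Zstar_avoiding i \<subseteq> Zstar"
  by (auto simp: Zstar_avoiding_def Zstar_iff)

lemma card_Zstar_avoiding:
  assumes "finite N" "i \<in> N"
  shows "card (Zstar_avoiding i) = 2 ^ (card N - 1) - 1"
proof -
  have "Zstar_avoiding i = {a. set_of a \<in> Pow (N - {i}) - {{}}}"
    using set_of_subset by (auto simp: Zstar_avoiding_def)
  moreover have "card (Pow (N - {i}) - {{}}) = 2 ^ (card N - 1) - 1"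
    using assms by (subst card_Diff_subset) (auto simp: card_Pow)
  ultimately show ?thesis using card_set_of_preimage[of "Pow (N - {i}) - {{}}"] by auto
qed

lemma strong_resolving_set_Zstar_avoiding:
  assumes "3 \<le> card N" "i \<in> N"
  shows "strong_resolving_set Zstar Gc_adj (Zstar_avoiding i)"
proof -
  interpret diameter_two "Zstar :: 'a set" Gc_adj by (rule diameter_two_Zstar[OF assms(1)])
  have resolves: "strongly_resolves Zstar Gc_adj (\<phi> {y}) u v \<and> \<phi> {y} \<in> Zstar_avoiding i"
    if "u \<in> Zstar - Zstar_avoiding i" "v \<in> Zstar - Zstar_avoiding i" "y \<in> set_of v - set_of u"
    for u v y
  proof -
    have "i \<in> set_of u \<inter> set_of v"
      using that(1,2) by (auto simp: Zstar_avoiding_def Zstar_iff)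
    moreover have "{y} \<subseteq> N" using that(3) set_of_subset by blast
    ultimately show ?thesis
      using on_geodesic_singleton[OF assms(1)] that
      by (auto simp: strongly_resolves_def Zstar_avoiding_def)
  qed
  show ?thesis
  proof (rule strong_resolving_setI[OF Zstar_avoiding_subset[OF assms(2)]])
    fix u v assume uv: "u \<in> Zstar - Zstar_avoiding i" "v \<in> Zstar - Zstar_avoiding i" "u \<noteq> v"
    then obtain y where "y \<in> set_of v - set_of u \<or> y \<in> set_of u - set_of v"
      using set_of_inject by blast
    then show "\<exists>w\<in>Zstar_avoiding i. strongly_resolves Zstar Gc_adj w u v"
      using resolves[of u v] resolves[of v u] uv unfolding strongly_resolves_def by blast
  qed
qed

(* The lattice complement; bounded_lattice itself provides none. *)
definition complement :: "'a \<Rightarrow> 'a" where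
  "complement a = \<phi> (N - set_of a)"

lemma complement_antipodal:
  assumes "u \<in> Zstar"
  shows "complement u \<in> Zstar \<and> complement u \<noteq> u \<and> \<not> Gc_adj u (complement u) \<and>
    complement (complement u) = u"
proof -
  have compl: "set_of (complement u) = N - set_of u" by (simp add: complement_def)
  have "set_of u \<subseteq> N" "set_of u \<noteq> {}" "set_of u \<noteq> N"
    using assms set_of_subset by (auto simp: Zstar_iff)
  then have "N - set_of u \<noteq> {}" "N - set_of u \<noteq> N" "N - set_of u \<noteq> set_of u"
    "set_of u \<inter> (N - set_of u) = {}" "N - (N - set_of u) = set_of u"
    by blast+
  then show ?thesis
    unfolding Zstar_iff Gc_adj_iff compl by (metis compl complement_def phi_set_of)
qed

lemma sdim_Zstar:
  assumes "3 \<le> card N"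
  shows "sdim (Zstar :: 'a set) Gc_adj = 2 ^ (card N - 1) - 1"
proof -
  interpret diameter_two "Zstar :: 'a set" Gc_adj by (rule diameter_two_Zstar[OF assms])
  have "finite N" using assms by (metis card.infinite not_numeral_le_zero)
  obtain i where "i \<in> N" using assms by (metis all_not_in_conv card.empty not_numeral_le_zero)
  have "finite (Zstar :: 'a set)"
    using bij_betw_finite[OF bij] \<open>finite N\<close> finite_subset[OF subset_UNIV] by blast
  moreover have "card (Zstar :: 'a set) = 2 * card (Zstar_avoiding i)"
    using card_Zstar card_Zstar_avoiding \<open>finite N\<close> \<open>i \<in> N\<close> assms
    by (cases "card N") (auto simp: right_diff_distrib')
  ultimately have "sdim (Zstar :: 'a set) Gc_adj = card (Zstar_avoiding i)"
    using sdim_eq_half_card[OF _ strong_resolving_set_Zstar_avoiding[OF assms \<open>i \<in> N\<close>] _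
        complement_antipodal]
    by blast
  then show ?thesis using card_Zstar_avoiding \<open>finite N\<close> \<open>i \<in> N\<close> by simp
qed
end

theorem corollary3p21:
  fixes n :: nat and \<phi> :: "nat set \<Rightarrow> 'a::bounded_lattice"
  assumes "n \<ge> 3"
    and "bij_betw \<phi> (Pow {..<n}) (UNIV :: 'a set)"
    and "\<forall>A\<in>Pow {..<n}. \<forall>B\<in>Pow {..<n}. A \<subseteq> B \<longleftrightarrow> \<phi> A \<le> \<phi> B"
  shows "sdim (Zstar :: 'a set) Gc_adj = 2 ^ n - 2 ^ (n - 1) - 1"
proof -
  interpret powerset_lattice_iso "{..<n}" \<phi>
    using assms(2,3) by unfold_locales auto
  obtain m where "n = Suc m" using assms(1) by (cases n) auto
  then show ?thesis using sdim_Zstar assms(1) by simp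
qed

end
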